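(* Let $A$ be a real random variable with $\mathbb{E}[A]=0$ and $\mathbb{E}[A^2]=1$, and let $B$ be a real random variable independent of $A$ with continuously differentiable probability density function $f_B$. Let $\delta>0$ be such that $c=\sup_{s\in(-\delta,\delta)}\max\{|f_B(s)|,|f_B'(s)|\}$ is finite. Then for every $n\ge1$, $$\Big|\Pr\big[B\ge A/\sqrt n\big]-\Pr[B\ge0]\Big|\le\frac1n\Big(\frac{2}{\delta^2}+\frac{c}{\delta}+\frac c2\Big).$$ *)

theory Defs
  imports "HOL-Probability.Probability"
begin

end

theory Submission imports Defs begin

text \<open>Let \<open>F t = P[B \<ge> t]\<close> and \<open>H t = \<integral>\<^sub>0\<^sup>t f\<close>, so that \<open>F t = F 0 - H t\<close> and \<open>\<bar>H\<bar> \<le> 1\<close>.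
  Conditioning on \<open>A\<close> gives \<open>P[B \<ge> A/\<surd>n] = E[F(A/\<surd>n)]\<close>, so the difference of the two
  probabilities is \<open>-E[H(A/\<surd>n)]\<close>. As \<open>E[A] = 0\<close>, the linear part \<open>f 0 \<cdot> A/\<surd>n\<close> of
  \<open>H(A/\<surd>n)\<close> has mean zero, and the quadratic error bound \<open>\<bar>H t - f 0 \<cdot> t\<bar> \<le> K t\<^sup>2\<close>
  (Taylor near 0, \<open>\<bar>H\<bar> \<le> 1\<close> away from 0) together with \<open>E[A\<^sup>2] = 1\<close> yields \<open>K/n\<close>.\<close>

lemma Maclaurin_linear_remainder_bound:
  fixes H f :: "real \<Rightarrow> real"
  assumes "\<And>s. \<bar>s\<bar> \<le> \<bar>t\<bar> \<Longrightarrow> (H has_real_derivative f s) (at s)"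
    and "\<And>s. \<bar>s\<bar> \<le> \<bar>t\<bar> \<Longrightarrow> f differentiable (at s)"
    and "\<And>s. \<bar>s\<bar> \<le> \<bar>t\<bar> \<Longrightarrow> \<bar>deriv f s\<bar> \<le> c"
  shows "\<bar>H t - H 0 - f 0 * t\<bar> \<le> c / 2 * t\<^sup>2"
proof -
  define D :: "nat \<Rightarrow> real \<Rightarrow> real" where "D m = (if m = 0 then H else if m = 1 then f else deriv f)" for m
  have "\<exists>s. \<bar>s\<bar> \<le> \<bar>t\<bar> \<and> H t = (\<Sum>m<2. D m 0 / fact m * t ^ m) + D 2 s / fact 2 * t ^ 2"
  proof (rule Maclaurin_bi_le)
    show "\<forall>m s. m < 2 \<and> \<bar>s\<bar> \<le> \<bar>t\<bar> \<longrightarrow> DERIV (D m) s :> D (Suc m) s"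
      using assms(1,2) by (auto simp: D_def less_2_cases_iff DERIV_deriv_iff_real_differentiable)
  qed (simp add: D_def)
  then obtain s where s: "\<bar>s\<bar> \<le> \<bar>t\<bar>" and "H t = H 0 + f 0 * t + deriv f s / 2 * t\<^sup>2"
    by (auto simp: D_def numeral_2_eq_2 lessThan_Suc)
  then have "\<bar>H t - H 0 - f 0 * t\<bar> = \<bar>deriv f s\<bar> / 2 * t\<^sup>2"
    by (simp add: abs_mult)
  also have "\<dots> \<le> c / 2 * t\<^sup>2"
    using assms(3)[OF s] by (simp add: divide_right_mono mult_right_mono)
  finally show ?thesis .
qed

text \<open>Near 0 this is Taylor's theorem; away from 0 the bounds \<open>\<bar>H\<bar> \<le> 1\<close> and
  \<open>\<bar>f 0\<bar> \<le> c\<close> are already quadratic in \<open>\<bar>t\<bar> / \<delta> \<ge> 1\<close>.\<close>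

lemma bounded_antiderivative_linear_approx:
  fixes H f :: "real \<Rightarrow> real"
  assumes H0: "H 0 = 0" and H_deriv: "\<And>s. (H has_real_derivative f s) (at s)"
    and f_diff: "\<And>s. f differentiable (at s)"
    and H_bound: "\<And>s. \<bar>H s\<bar> \<le> 1"
    and f_bound: "\<And>s. \<bar>s\<bar> < \<delta> \<Longrightarrow> \<bar>f s\<bar> \<le> c \<and> \<bar>deriv f s\<bar> \<le> c"
    and "\<delta> > 0"
  shows "\<bar>H t - f 0 * t\<bar> \<le> (1 / \<delta>\<^sup>2 + c / \<delta> + c / 2) * t\<^sup>2"
proof -
  have f0: "\<bar>f 0\<bar> \<le> c" and c0: "c \<ge> 0"
    using f_bound[of 0] \<open>\<delta> > 0\<close> by auto
  show ?thesis
  proof (cases "\<bar>t\<bar> < \<delta>")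
    case True
    then have "\<bar>H t - f 0 * t\<bar> \<le> c / 2 * t\<^sup>2"
      using Maclaurin_linear_remainder_bound[of t H f c] H_deriv f_diff f_bound H0 by force
    then show ?thesis
      using \<open>\<delta> > 0\<close> c0 by (simp add: algebra_simps add_increasing)
  next
    case False
    then have "\<delta> \<le> \<bar>t\<bar>"
      by simp
    then have "\<delta> * \<delta> \<le> \<bar>t\<bar> * \<bar>t\<bar>" "\<delta> * \<bar>t\<bar> \<le> \<bar>t\<bar> * \<bar>t\<bar>"
      using \<open>\<delta> > 0\<close> by (simp_all only: mult_mono mult_right_mono less_imp_le abs_ge_zero)
    then have "\<delta>\<^sup>2 \<le> t\<^sup>2" "\<delta> * \<bar>t\<bar> \<le> t\<^sup>2"
      by (simp_all add: power2_eq_square)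
    then have "1 \<le> t\<^sup>2 / \<delta>\<^sup>2" "\<bar>t\<bar> \<le> t\<^sup>2 / \<delta>"
      using \<open>\<delta> > 0\<close> by (simp_all add: field_simps)
    moreover have "\<bar>f 0 * t\<bar> \<le> c * \<bar>t\<bar>"
      using f0 by (simp add: abs_mult mult_right_mono)
    moreover have "c * \<bar>t\<bar> \<le> c * (t\<^sup>2 / \<delta>)"
      using \<open>\<bar>t\<bar> \<le> t\<^sup>2 / \<delta>\<close> c0 by (rule mult_left_mono)
    ultimately have "\<bar>H t - f 0 * t\<bar> \<le> t\<^sup>2 / \<delta>\<^sup>2 + c * (t\<^sup>2 / \<delta>)"
      using H_bound[of t] abs_triangle_ineq4[of "H t" "f 0 * t"] by linarith
    moreover have "(1 / \<delta>\<^sup>2 + c / \<delta> + c / 2) * t\<^sup>2 = t\<^sup>2 / \<delta>\<^sup>2 + c * (t\<^sup>2 / \<delta>) + c / 2 * t\<^sup>2"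
      by (simp add: algebra_simps)
    moreover have "0 \<le> c / 2 * t\<^sup>2"
      using c0 by simp
    ultimately show ?thesis
      by linarith
  qed
qed

lemma interval_integral_has_real_derivative:
  fixes f :: "real \<Rightarrow> real"
  assumes "continuous_on UNIV f"
  shows "((\<lambda>t. LBINT y=ereal a..ereal t. f y) has_real_derivative f x) (at x)"
proof -
  have "at x within {min a (x - 1)..max a (x + 1)} = at x"
    by (intro at_within_interior) auto
  then show ?thesis
    using interval_integral_FTC2[of "min a (x - 1)" a "max a (x + 1)" f x]
      continuous_on_subset[OF assms]
    by (auto simp: has_real_derivative_iff_has_vector_derivative)
qed

lemma measure_distributed_Ico:
  fixes X :: "'a \<Rightarrow> real" and f :: "real \<Rightarrow> real"
  assumes dist: "distributed M lborel X (\<lambda>x. ennreal (f x))" and "\<And>x. 0 \<le> f x" and "a \<le> b"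
  shows "measure M {x\<in>space M. a \<le> X x \<and> X x < b} = (LBINT y=ereal a..ereal b. f y)"
proof -
  have [measurable]: "f \<in> borel_measurable borel"
    using distributed_real_measurable[OF _ dist] assms(2) by simp
  have "emeasure M (X -` {a..<b} \<inter> space M) = (\<integral>\<^sup>+y. ennreal (f y * indicator {a..<b} y) \<partial>lborel)"
    using distributed_emeasure[OF dist, of "{a..<b}"]
    by (auto intro!: nn_integral_cong simp: indicator_def)
  moreover have "(LBINT y=ereal a..ereal b. f y) = (\<integral>y. f y * indicator {a..<b} y \<partial>lborel)"
    unfolding interval_integral_Ico[OF \<open>a \<le> b\<close>] by (simp add: set_lebesgue_integral_def mult.commute)
  moreover have "(\<integral>y. f y * indicator {a..<b} y \<partial>lborel)
      = enn2real (\<integral>\<^sup>+y. ennreal (f y * indicator {a..<b} y) \<partial>lborel)"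
    by (rule integral_eq_nn_integral) (auto simp: assms(2))
  moreover have "X -` {a..<b} \<inter> space M = {x\<in>space M. a \<le> X x \<and> X x < b}"
    by auto
  ultimately show ?thesis
    by (simp add: measure_def)
qed

lemma (in prob_space) prob_ge_distributed:
  fixes X :: "'a \<Rightarrow> real" and f :: "real \<Rightarrow> real"
  assumes dist: "distributed M lborel X (\<lambda>x. ennreal (f x))" and "\<And>x. 0 \<le> f x"
  shows "prob {x\<in>space M. b \<le> X x} = prob {x\<in>space M. a \<le> X x} - (LBINT y=ereal a..ereal b. f y)"
proof -
  have [measurable]: "X \<in> borel_measurable M"
    using distributed_measurable[OF dist] by simp
  have split: "prob {x\<in>space M. u \<le> X x \<and> X x < v} = prob {x\<in>space M. u \<le> X x} - prob {x\<in>space M. v \<le> X x}"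
    if "u \<le> v" for u v
  proof -
    have "{x\<in>space M. u \<le> X x \<and> X x < v} = {x\<in>space M. u \<le> X x} - {x\<in>space M. v \<le> X x}"
      by auto
    then show ?thesis
      using that by (simp add: finite_measure_Diff subset_eq)
  qed
  show ?thesis
  proof (cases "a \<le> b")
    case True
    then show ?thesis
      using split measure_distributed_Ico[OF assms] by simp
  next
    case False
    then show ?thesis
      using split[of b a] measure_distributed_Ico[OF assms, of b a]
      by (simp add: interval_integral_endpoints_reverse[of a b])
  qed
qed

lemma (in finite_measure) borel_measurable_measure_ge:
  fixes X :: "'a \<Rightarrow> real"
  assumes [measurable]: "X \<in> borel_measurable M"
  shows "(\<lambda>t. measure M {x\<in>space M. t \<le> X x}) \<in> borel_measurable borel"
proof -
  have "mono (\<lambda>t. - measure M {x\<in>space M. t \<le> X x})"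
    by (auto intro!: monoI finite_measure_mono)
  then have "(\<lambda>t. - (- measure M {x\<in>space M. t \<le> X x})) \<in> borel_measurable borel"
    by (intro borel_measurable_uminus borel_measurable_mono)
  then show ?thesis
    by simp
qed

text \<open>Conditioning on \<open>X\<close>: by independence the joint law is the product measure, and
  Tonelli integrates out \<open>Y\<close> first.\<close>

lemma (in prob_space) indep_var_prob_le:
  fixes X Y :: "'a \<Rightarrow> real"
  assumes indep: "indep_var borel X borel Y"
  shows "prob {x\<in>space M. X x \<le> Y x} = (\<integral>x. prob {y\<in>space M. X x \<le> Y y} \<partial>M)"
proof -
  have [measurable]: "X \<in> borel_measurable M" "Y \<in> borel_measurable M"
    using indep_var_rv1[OF indep] indep_var_rv2[OF indep] by auto
  have [measurable]: "(\<lambda>t. prob {y\<in>space M. t \<le> Y y}) \<in> borel_measurable borel"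
    by (rule borel_measurable_measure_ge) simp
  interpret Y: prob_space "distr M borel Y"
    by (rule prob_space_distr) simp
  define S where "S = {p :: real \<times> real. fst p \<le> snd p}"
  have "S \<in> sets borel"
    unfolding S_def by (intro borel_closed closed_Collect_le continuous_intros)
  then have S: "S \<in> sets (borel \<Otimes>\<^sub>M borel)"
    unfolding borel_prod by simp
  have "emeasure M {x\<in>space M. X x \<le> Y x} = emeasure (distr M (borel \<Otimes>\<^sub>M borel) (\<lambda>x. (X x, Y x))) S"
    using S by (subst emeasure_distr) (auto simp: S_def intro!: arg_cong[where f="emeasure M"])
  also have "\<dots> = emeasure (distr M borel X \<Otimes>\<^sub>M distr M borel Y) S"
    using indep by (simp add: indep_var_distribution_eq)
  also have "\<dots> = (\<integral>\<^sup>+t. emeasure (distr M borel Y) (Pair t -` S) \<partial>distr M borel X)"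
    by (rule Y.emeasure_pair_measure_alt) (use S in simp)
  also have "\<dots> = (\<integral>\<^sup>+t. ennreal (prob {y\<in>space M. t \<le> Y y}) \<partial>distr M borel X)"
  proof (intro nn_integral_cong)
    fix t :: real
    have "Pair t -` S = {t..}"
      by (auto simp: S_def)
    then show "emeasure (distr M borel Y) (Pair t -` S) = ennreal (prob {y\<in>space M. t \<le> Y y})"
      by (simp add: emeasure_distr emeasure_eq_measure vimage_def Int_def conj_commute)
  qed
  also have "\<dots> = (\<integral>\<^sup>+x. ennreal (prob {y\<in>space M. X x \<le> Y y}) \<partial>M)"
    by (simp add: nn_integral_distr)
  finally show ?thesis
    by (simp add: measure_def integral_eq_nn_integral)
qed

lemma (in prob_space) abs_expectation_le_of_quadratic_error:
  fixes X :: "'a \<Rightarrow> real" and G :: "real \<Rightarrow> real"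
  assumes X: "integrable M X" and X2: "integrable M (\<lambda>x. (X x)\<^sup>2)" and "expectation X = 0"
    and [measurable]: "G \<in> borel_measurable borel"
    and G_approx: "\<And>t. \<bar>G t - a * t\<bar> \<le> K * t\<^sup>2"
  shows "\<bar>expectation (\<lambda>x. G (X x))\<bar> \<le> K * expectation (\<lambda>x. (X x)\<^sup>2)"
proof -
  have [measurable]: "X \<in> borel_measurable M"
    using X by simp
  have "K \<ge> 0"
    using G_approx[of 1] by simp
  have err_int: "integrable M (\<lambda>x. G (X x) - a * X x)"
    by (rule Bochner_Integration.integrable_bound[OF integrable_mult_right[OF X2, of K]])
      (use \<open>K \<ge> 0\<close> G_approx in auto)
  have "expectation (\<lambda>x. G (X x)) = expectation (\<lambda>x. (G (X x) - a * X x) + a * X x)"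
    by simp
  also have "\<dots> = expectation (\<lambda>x. G (X x) - a * X x)"
    using err_int X \<open>expectation X = 0\<close> by (subst Bochner_Integration.integral_add) auto
  finally have "\<bar>expectation (\<lambda>x. G (X x))\<bar> \<le> expectation (\<lambda>x. \<bar>G (X x) - a * X x\<bar>)"
    using integral_abs_bound by simp
  also have "\<dots> \<le> expectation (\<lambda>x. K * (X x)\<^sup>2)"
    using err_int X2 G_approx by (intro integral_mono) auto
  finally show ?thesis
    by simp
qed

theorem lemma5:
  fixes M :: "'a measure" and A B :: "'a \<Rightarrow> real" and f :: "real \<Rightarrow> real"
    and \<delta> :: real and n :: nat
  assumes "prob_space M"
    and "A \<in> borel_measurable M" and "B \<in> borel_measurable M"
    and "integrable M A" and "integrable M (\<lambda>x. (A x)\<^sup>2)"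
    and "prob_space.expectation M A = 0"
    and "prob_space.expectation M (\<lambda>x. (A x)\<^sup>2) = 1"
    and "prob_space.indep_var M borel A borel B"
    and "\<And>x. f x \<ge> 0"
    and "distributed M lborel B (\<lambda>x. ennreal (f x))"
    and "\<And>x. f differentiable (at x)" and "continuous_on UNIV (deriv f)"
    and "\<delta> > 0"
    and "bdd_above ((\<lambda>s. max \<bar>f s\<bar> \<bar>deriv f s\<bar>) ` {-\<delta><..<\<delta>})"
    and "n \<ge> 1"
  shows "\<bar>measure M {x \<in> space M. B x \<ge> A x / sqrt (real n)} - measure M {x \<in> space M. B x \<ge> 0}\<bar>
    \<le> (1 / real n) * (2 / \<delta>\<^sup>2 + (SUP s\<in>{-\<delta><..<\<delta>}. max \<bar>f s\<bar> \<bar>deriv f s\<bar>) / \<delta>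
        + (SUP s\<in>{-\<delta><..<\<delta>}. max \<bar>f s\<bar> \<bar>deriv f s\<bar>) / 2)"
proof -
  interpret prob_space M by fact
  define c where "c = (SUP s\<in>{-\<delta><..<\<delta>}. max \<bar>f s\<bar> \<bar>deriv f s\<bar>)"
  have f_bound: "\<bar>f s\<bar> \<le> c \<and> \<bar>deriv f s\<bar> \<le> c" if "\<bar>s\<bar> < \<delta>" for s
    using cSUP_upper[OF _ assms(14), of s] that by (simp add: c_def abs_less_iff)
  define H where "H t = (LBINT y=ereal 0..ereal t. f y)" for t
  have H_deriv: "(H has_real_derivative f x) (at x)" for x
    unfolding H_def using assms(11)
    by (intro interval_integral_has_real_derivative continuous_at_imp_continuous_on
        differentiable_imp_continuous_within ballI)
  then have [measurable]: "H \<in> borel_measurable borel"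
    by (intro borel_measurable_continuous_onI continuous_at_imp_continuous_on ballI DERIV_isCont)
  have survival: "prob {x\<in>space M. t \<le> B x} = prob {x\<in>space M. 0 \<le> B x} - H t" for t
    unfolding H_def using assms(10,9) by (rule prob_ge_distributed)
  have H_bound: "\<bar>H t\<bar> \<le> 1" for t
    using survival[of t] prob_le_1[of "{x\<in>space M. t \<le> B x}"] prob_le_1[of "{x\<in>space M. 0 \<le> B x}"]
      measure_nonneg[of M "{x\<in>space M. t \<le> B x}"] measure_nonneg[of M "{x\<in>space M. 0 \<le> B x}"]
    by linarith
  have H0: "H 0 = 0"
    unfolding H_def by (simp add: interval_lebesgue_integral_def einterval_same set_lebesgue_integral_def)
  define s where "s = sqrt (real n)"
  have [measurable]: "A \<in> borel_measurable M" by fact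
  have "indep_var borel ((\<lambda>a. a / s) \<circ> A) borel (id \<circ> B)"
    by (rule indep_var_compose[OF assms(8)]) simp_all
  then have "prob {x\<in>space M. A x / s \<le> B x} = expectation (\<lambda>x. prob {y\<in>space M. A x / s \<le> B y})"
    using indep_var_prob_le[of "\<lambda>x. A x / s" B] by (simp add: o_def)
  also have "\<dots> = expectation (\<lambda>x. prob {y\<in>space M. 0 \<le> B y} - H (A x / s))"
    by (intro Bochner_Integration.integral_cong refl survival)
  also have "\<dots> = prob {x\<in>space M. 0 \<le> B x} - expectation (\<lambda>x. H (A x / s))"
    by (subst Bochner_Integration.integral_diff) (auto intro!: integrable_const_bound[where B=1] simp: H_bound prob_space)
  finally have "\<bar>prob {x\<in>space M. A x / s \<le> B x} - prob {x\<in>space M. 0 \<le> B x}\<bar>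
      = \<bar>expectation (\<lambda>x. H (A x / s))\<bar>"
    by simp
  also have "\<dots> \<le> (1 / \<delta>\<^sup>2 + c / \<delta> + c / 2) * expectation (\<lambda>x. (A x / s)\<^sup>2)"
    using assms(4-6) bounded_antiderivative_linear_approx[OF H0 H_deriv assms(11) H_bound f_bound assms(13)]
    by (intro abs_expectation_le_of_quadratic_error) (auto simp: power_divide)
  also have "expectation (\<lambda>x. (A x / s)\<^sup>2) = 1 / real n"
    using assms(7,15) by (simp add: s_def power_divide)
  finally show ?thesis
    using assms(13,15) by (simp add: s_def c_def field_simps)
qed

end
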